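(* Let $\star$ be a continuous and sup-continuous triangle function such that the group of invertible elements of $(\Delta^+,\star)$ is trivial, i.e. $\mathcal U(\Delta^+)=\{\mathcal H_0\}$. Let $(G,\cdot,D,\star)$ and $(G',\cdot,D',\star)$ be two complete invariant probabilistic metric groups. Then the following are equivalent: (1) there is a group isomorphism $\mathcal I:G\to G'$ with $D'(\mathcal I(x),\mathcal I(y))=D(x,y)$ for all $x,y\in G$; (2) there is a monoid isomorphism $\Phi:(Lip^1_\star(G,\Delta^+),\odot)\to(Lip^1_\star(G',\Delta^+),\odot)$ with $\overline{\mathbb D}'(\Phi(f),\Phi(g))=\overline{\mathbb D}(f,g)$ for all $f,g\in Lip^1_\star(G,\Delta^+)$ (where $\overline{\mathbb D}$, $\overline{\mathbb D}'$ are the metrics defined below for $G$ and $G'$ respectively).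
   Context: A distribution function is a nondecreasing, left-continuous function $F:[-\infty,+\infty]\to[0,1]$ with $F(-\infty)=0$, $F(+\infty)=1$; $\Delta^+$ is the set of distribution functions with $F(0)=0$, ordered pointwise (a complete lattice with maximum $\mathcal H_0$ and minimum $\mathcal H_\infty$, where $\mathcal H_0(t)=0$ for $t\le0$, $1$ for $t>0$, and $\mathcal H_\infty(t)=0$ for $t<+\infty$, $\mathcal H_\infty(+\infty)=1$). A triangle function is a binary operation $\star$ on $\Delta^+$ that is commutative, associative, nondecreasing in each argument, with $F\star\mathcal H_0=F$; $\mathcal U(\Delta^+)$ is the group of invertible elements of the monoid $(\Delta^+,\star)$. $\star$ is sup-continuous if $\sup_i(F_i\star L)=(\sup_iF_i)\star L$ for every nonempty family $(F_i)$ and every $L$. $F_n\xrightarrow{w}F$ means $F_n(t)\to F(t)$ at every continuity point $t\in\mathbb R$ of $F$; $\star$ is continuous if $F_n\star L_n\xrightarrow{w}F\star L$ whenever $F_n\xrightarrow{w}F$, $L_n\xrightarrow{w}L$. A probabilistic metric space $(G,D,\star)$ consists of a set $G$, a triangle function $\star$ and $D:G\times G\to\Delta^+$ with (i) $D(p,q)=\mathcal H_0$ iff $p=q$; (ii) $D(p,q)=D(q,p)$; (iii) $D(p,q)\star D(q,r)\le D(p,r)$. If $(G,\cdot)$ is a group and $D(pr,qr)=D(rp,rq)=D(p,q)$ for all $p,q,r$, it is an invariant probabilistic metric group. A sequence $(z_n)$ is Cauchy if $D(z_n,z_p)\xrightarrow{w}\mathcal H_0$ as $n,p\to\infty$; completeness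 means every Cauchy sequence has a point $z$ with $D(z_n,z)\xrightarrow{w}\mathcal H_0$. $Lip^1_\star(G,\Delta^+)$ is the set of maps $f:G\to\Delta^+$ with $D(x,y)\star f(y)\le f(x)$ for all $x,y$. For maps $f,g:G\to\Delta^+$, $(f\odot g)(x)=\sup_{y,z\in G,\ yz=x}f(y)\star g(z)$. $\Pi(G)$ is the set of $f\in Lip^1_\star(G,\Delta^+)$ for which there is a Cauchy sequence $(a_n)\subset G$ with $D(a_n,x)\xrightarrow{w}f(x)$ for all $x$. $\mathbb D(f,g)=\sup_{x\in G}f(x)\star g(x)$ for $f,g\in\Pi(G)$. $\overline{\mathbb D}$ on $Lip^1_\star(G,\Delta^+)$ is: $\overline{\mathbb D}(f,g)=\mathbb D(f,g)$ if $f,g\in\Pi(G)$; $\overline{\mathbb D}(f,g)=\mathcal H_0$ if $f=g$; $\overline{\mathbb D}(f,g)=\mathcal H_\infty$ if $f\ne g$ and $(f,g)\notin\Pi(G)\times\Pi(G)$. *)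

theory Defs
  imports "HOL-Algebra.Group" "HOL-Library.Extended_Real"
begin

type_synonym dfun = "ereal \<Rightarrow> real"

text \<open>Distribution functions on the extended real line; left-continuity is
required at every real point (H_infinity is not left-continuous at +infinity).\<close>
definition distribution_fun :: "dfun \<Rightarrow> bool" where
  "distribution_fun F \<longleftrightarrow> mono F \<and> (\<forall>t. 0 \<le> F t \<and> F t \<le> 1)
     \<and> (\<forall>t::real. ((\<lambda>s. F (ereal s)) \<longlongrightarrow> F (ereal t)) (at_left t))
     \<and> F (-\<infinity>) = 0 \<and> F \<infinity> = 1"

definition Delta_plus :: "dfun set" where
  "Delta_plus = {F. distribution_fun F \<and> F 0 = 0}"

definition H0 :: dfun where
  "H0 t = (if t \<le> 0 then 0 else 1)"

definition Hinf :: dfun where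
  "Hinf t = (if t = \<infinity> then 1 else 0)"

definition dsup :: "dfun set \<Rightarrow> dfun" where
  "dsup S = (\<lambda>t. SUP F\<in>S. F t)"

definition wconv :: "('i \<Rightarrow> dfun) \<Rightarrow> dfun \<Rightarrow> 'i filter \<Rightarrow> bool" where
  "wconv Fs F net \<longleftrightarrow> (\<forall>t::real. isCont (\<lambda>s. F (ereal s)) t \<longrightarrow>
      ((\<lambda>i. Fs i (ereal t)) \<longlongrightarrow> F (ereal t)) net)"

definition triangle_function :: "(dfun \<Rightarrow> dfun \<Rightarrow> dfun) \<Rightarrow> bool" where
  "triangle_function T \<longleftrightarrow>
     (\<forall>F\<in>Delta_plus. \<forall>L\<in>Delta_plus. T F L \<in> Delta_plus)
   \<and> (\<forall>F\<in>Delta_plus. \<forall>L\<in>Delta_plus. T F L = T L F)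
   \<and> (\<forall>F\<in>Delta_plus. \<forall>L\<in>Delta_plus. \<forall>K\<in>Delta_plus. T (T F L) K = T F (T L K))
   \<and> (\<forall>F\<in>Delta_plus. \<forall>F'\<in>Delta_plus. \<forall>L\<in>Delta_plus. F \<le> F' \<longrightarrow> T F L \<le> T F' L)
   \<and> (\<forall>F\<in>Delta_plus. T F H0 = F)"

definition units_Delta :: "(dfun \<Rightarrow> dfun \<Rightarrow> dfun) \<Rightarrow> dfun set" where
  "units_Delta T = {F\<in>Delta_plus. \<exists>L\<in>Delta_plus. T F L = H0}"

definition sup_continuous_tf :: "(dfun \<Rightarrow> dfun \<Rightarrow> dfun) \<Rightarrow> bool" where
  "sup_continuous_tf T \<longleftrightarrow> (\<forall>S L. S \<subseteq> Delta_plus \<and> S \<noteq> {} \<and> L \<in> Delta_plus \<longrightarrow>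
      dsup ((\<lambda>F. T F L) ` S) = T (dsup S) L)"

definition continuous_tf :: "(dfun \<Rightarrow> dfun \<Rightarrow> dfun) \<Rightarrow> bool" where
  "continuous_tf T \<longleftrightarrow> (\<forall>Fs Ls F L. range Fs \<subseteq> Delta_plus \<and> range Ls \<subseteq> Delta_plus
      \<and> F \<in> Delta_plus \<and> L \<in> Delta_plus
      \<and> wconv Fs F sequentially \<and> wconv Ls L sequentially
      \<longrightarrow> wconv (\<lambda>n. T (Fs n) (Ls n)) (T F L) sequentially)"

definition pm_space :: "'a set \<Rightarrow> ('a \<Rightarrow> 'a \<Rightarrow> dfun) \<Rightarrow> (dfun \<Rightarrow> dfun \<Rightarrow> dfun) \<Rightarrow> bool" where
  "pm_space S D T \<longleftrightarrow> triangle_function T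
     \<and> (\<forall>p\<in>S. \<forall>q\<in>S. D p q \<in> Delta_plus)
     \<and> (\<forall>p\<in>S. \<forall>q\<in>S. D p q = H0 \<longleftrightarrow> p = q)
     \<and> (\<forall>p\<in>S. \<forall>q\<in>S. D p q = D q p)
     \<and> (\<forall>p\<in>S. \<forall>q\<in>S. \<forall>r\<in>S. T (D p q) (D q r) \<le> D p r)"

definition inv_pm_group :: "('a, 'b) monoid_scheme \<Rightarrow> ('a \<Rightarrow> 'a \<Rightarrow> dfun) \<Rightarrow> (dfun \<Rightarrow> dfun \<Rightarrow> dfun) \<Rightarrow> bool" where
  "inv_pm_group G D T \<longleftrightarrow> group G \<and> pm_space (carrier G) D T
     \<and> (\<forall>p\<in>carrier G. \<forall>q\<in>carrier G. \<forall>r\<in>carrier G.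
          D (p \<otimes>\<^bsub>G\<^esub> r) (q \<otimes>\<^bsub>G\<^esub> r) = D p q \<and> D (r \<otimes>\<^bsub>G\<^esub> p) (r \<otimes>\<^bsub>G\<^esub> q) = D p q)"

definition pm_cauchy :: "'a set \<Rightarrow> ('a \<Rightarrow> 'a \<Rightarrow> dfun) \<Rightarrow> (nat \<Rightarrow> 'a) \<Rightarrow> bool" where
  "pm_cauchy S D z \<longleftrightarrow> range z \<subseteq> S \<and>
     wconv (\<lambda>(n, p). D (z n) (z p)) H0 (sequentially \<times>\<^sub>F sequentially)"

definition pm_complete :: "'a set \<Rightarrow> ('a \<Rightarrow> 'a \<Rightarrow> dfun) \<Rightarrow> bool" where
  "pm_complete S D \<longleftrightarrow> (\<forall>z. pm_cauchy S D z \<longrightarrow>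
      (\<exists>x\<in>S. wconv (\<lambda>n. D (z n) x) H0 sequentially))"

definition Lip1 :: "(dfun \<Rightarrow> dfun \<Rightarrow> dfun) \<Rightarrow> 'a set \<Rightarrow> ('a \<Rightarrow> 'a \<Rightarrow> dfun) \<Rightarrow> ('a \<Rightarrow> dfun) set" where
  "Lip1 T S D = {f \<in> S \<rightarrow>\<^sub>E Delta_plus. \<forall>x\<in>S. \<forall>y\<in>S. T (D x y) (f y) \<le> f x}"

definition odot :: "(dfun \<Rightarrow> dfun \<Rightarrow> dfun) \<Rightarrow> ('a, 'b) monoid_scheme \<Rightarrow>
    ('a \<Rightarrow> dfun) \<Rightarrow> ('a \<Rightarrow> dfun) \<Rightarrow> ('a \<Rightarrow> dfun)" where
  "odot T G f g = restrict (\<lambda>x. dsup {T (f y) (g z) | y z.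
      y \<in> carrier G \<and> z \<in> carrier G \<and> y \<otimes>\<^bsub>G\<^esub> z = x}) (carrier G)"

definition PiG :: "(dfun \<Rightarrow> dfun \<Rightarrow> dfun) \<Rightarrow> 'a set \<Rightarrow> ('a \<Rightarrow> 'a \<Rightarrow> dfun) \<Rightarrow> ('a \<Rightarrow> dfun) set" where
  "PiG T S D = {f \<in> Lip1 T S D. \<exists>a. pm_cauchy S D a \<and>
      (\<forall>x\<in>S. wconv (\<lambda>n. D (a n) x) (f x) sequentially)}"

definition DD :: "(dfun \<Rightarrow> dfun \<Rightarrow> dfun) \<Rightarrow> 'a set \<Rightarrow> ('a \<Rightarrow> dfun) \<Rightarrow> ('a \<Rightarrow> dfun) \<Rightarrow> dfun" where
  "DD T S f g = dsup ((\<lambda>x. T (f x) (g x)) ` S)"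

definition DDbar :: "(dfun \<Rightarrow> dfun \<Rightarrow> dfun) \<Rightarrow> 'a set \<Rightarrow> ('a \<Rightarrow> 'a \<Rightarrow> dfun) \<Rightarrow>
    ('a \<Rightarrow> dfun) \<Rightarrow> ('a \<Rightarrow> dfun) \<Rightarrow> dfun" where
  "DDbar T S D f g = (if f \<in> PiG T S D \<and> g \<in> PiG T S D then DD T S f g
      else if f = g then H0 else Hinf)"

end

theory Submission
  imports Defs "HOL-Analysis.Borel_Space"
begin

text \<open>The maps \<open>D(a, \<cdot>)\<close> form a copy of \<open>G\<close> inside the monoid of 1-Lipschitz maps, on which
  the metric of the monoid restricts to \<open>D\<close>, and they are exactly its invertible elements: if
  \<open>h \<odot> k = D(1, \<cdot>)\<close>, points \<open>y\<^sub>n\<close> with \<open>h(y\<^sub>n)\<close> and \<open>k(y\<^sub>n\<inverse>)\<close> close to \<open>\<H>\<^sub>0\<close> form a Cauchy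
  sequence whose limit \<open>b\<close> satisfies \<open>h = D(\<cdot>, b)\<close>. Hence a metric monoid isomorphism restricts
  to an isometric group isomorphism; conversely, an isometric group isomorphism acts on
  1-Lipschitz maps by composition.\<close>

section \<open>Distribution functions\<close>

lemma Delta_plus_mono: "F \<in> Delta_plus \<Longrightarrow> s \<le> t \<Longrightarrow> F s \<le> F t"
  by (auto simp: Delta_plus_def distribution_fun_def mono_def)

lemma Delta_plus_nonneg: "F \<in> Delta_plus \<Longrightarrow> 0 \<le> F t"
  by (simp add: Delta_plus_def distribution_fun_def)

lemma Delta_plus_le_one: "F \<in> Delta_plus \<Longrightarrow> F t \<le> 1"
  by (simp add: Delta_plus_def distribution_fun_def)

lemma Delta_plus_infinity: "F \<in> Delta_plus \<Longrightarrow> F \<infinity> = 1"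
  by (simp add: Delta_plus_def distribution_fun_def)

lemma Delta_plus_left_continuous:
  "F \<in> Delta_plus \<Longrightarrow> ((\<lambda>s. F (ereal s)) \<longlongrightarrow> F (ereal t)) (at_left t)"
  by (simp add: Delta_plus_def distribution_fun_def)

lemma Delta_plus_nonpos: "F \<in> Delta_plus \<Longrightarrow> t \<le> 0 \<Longrightarrow> F t = 0"
  using Delta_plus_mono[of F t 0] Delta_plus_nonneg[of F t]
  by (simp add: Delta_plus_def)

lemma Delta_plus_le_H0: "F \<in> Delta_plus \<Longrightarrow> F \<le> H0"
  by (auto simp: le_fun_def H0_def Delta_plus_nonpos Delta_plus_le_one)

lemma Delta_plus_continuity_point_between:
  assumes "F \<in> Delta_plus" "b < r"
  obtains c where "b < c" "c < r" "isCont (\<lambda>s. F (ereal s)) c"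
proof -
  have "mono (\<lambda>s. F (ereal s))"
    using Delta_plus_mono[OF assms(1)] by (auto simp: mono_def)
  from open_minus_countable[OF mono_ctble_discont[OF this], of "{b<..<r}"] assms(2)
  show ?thesis using that by auto
qed

definition step_fun :: "real \<Rightarrow> real \<Rightarrow> dfun" where
  "step_fun c v t = (if t \<le> ereal c then 0 else if t = \<infinity> then 1 else v)"

lemma H0_eq_step_fun: "H0 = step_fun 0 1"
  by (auto simp: fun_eq_iff H0_def step_fun_def zero_ereal_def)

lemma step_fun_Delta_plus:
  assumes "0 \<le> c" "0 \<le> v" "v \<le> 1"
  shows "step_fun c v \<in> Delta_plus"
proof -
  have "mono (step_fun c v)"
  proof (rule monoI)
    fix s t :: ereal
    assume "s \<le> t"
    then show "step_fun c v s \<le> step_fun c v t"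
      using assms by (auto simp: step_fun_def)
  qed
  moreover have "((\<lambda>s. step_fun c v (ereal s)) \<longlongrightarrow> step_fun c v (ereal t)) (at_left t)" for t
  proof -
    have "eventually (\<lambda>s. step_fun c v (ereal s) = step_fun c v (ereal t)) (at_left t)"
    proof (cases "t \<le> c")
      case True
      have "eventually (\<lambda>s. s \<in> {t-1<..<t}) (at_left t)"
        by (rule eventually_at_left_real) simp
      then show ?thesis
        by eventually_elim (use True in \<open>auto simp: step_fun_def\<close>)
    next
      case False
      have "eventually (\<lambda>s. s \<in> {c<..<t}) (at_left t)"
        by (rule eventually_at_left_real) (use False in simp)
      then show ?thesis
        by eventually_elim (use False in \<open>auto simp: step_fun_def\<close>)
    qed
    then show ?thesis
      by (rule tendsto_eventually)
  qed
  ultimately show ?thesis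
    using assms by (auto simp: Delta_plus_def distribution_fun_def step_fun_def)
qed

lemma H0_Delta_plus: "H0 \<in> Delta_plus"
  unfolding H0_eq_step_fun by (rule step_fun_Delta_plus) auto

lemma step_fun_mono:
  assumes "c' \<le> c" "v \<le> v'" "0 \<le> v'"
  shows "step_fun c v \<le> step_fun c' v'"
  using assms by (auto simp: le_fun_def step_fun_def) (meson ereal_less_eq(3) order_trans)

lemma step_fun_le:
  assumes F: "F \<in> Delta_plus" and v: "v \<le> F (ereal c)"
  shows "step_fun c v \<le> F"
proof (rule le_funI)
  fix t
  show "step_fun c v t \<le> F t"
  proof (cases "t \<le> ereal c")
    case False
    then have "F (ereal c) \<le> F t"
      by (intro Delta_plus_mono[OF F]) simp
    then show ?thesis
      using False v Delta_plus_infinity[OF F] by (auto simp: step_fun_def)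
  qed (use Delta_plus_nonneg[OF F] in \<open>simp add: step_fun_def\<close>)
qed

lemma isCont_H0: "0 < t \<Longrightarrow> isCont (\<lambda>s. H0 (ereal s)) t"
proof -
  assume t: "0 < t"
  have "eventually (\<lambda>s. 0 < s) (at t)"
    using order_tendstoD(1)[OF tendsto_ident_at t] .
  then have "eventually (\<lambda>s. H0 (ereal s) = H0 (ereal t)) (at t)"
    by eventually_elim (use t in \<open>simp add: H0_def\<close>)
  then show ?thesis
    unfolding isCont_def by (rule tendsto_eventually)
qed

definition H0_approx :: "nat \<Rightarrow> dfun" where
  "H0_approx n = step_fun (1 / real (Suc n)) (1 - 1 / real (Suc n))"

lemma H0_approx_Delta_plus: "H0_approx n \<in> Delta_plus"
  unfolding H0_approx_def by (rule step_fun_Delta_plus) auto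

lemma H0_approx_mono: "n \<le> m \<Longrightarrow> H0_approx n \<le> H0_approx m"
  unfolding H0_approx_def by (rule step_fun_mono) (auto simp: frac_le)

lemma H0_approx_le:
  "F \<in> Delta_plus \<Longrightarrow> 1 - 1 / real (Suc n) \<le> F (ereal (1 / real (Suc n))) \<Longrightarrow> H0_approx n \<le> F"
  unfolding H0_approx_def by (rule step_fun_le)

lemma wconv_H0_approx: "wconv H0_approx H0 sequentially"
  unfolding wconv_def
proof (intro allI impI)
  fix t :: real
  show "(\<lambda>n. H0_approx n (ereal t)) \<longlonglongrightarrow> H0 (ereal t)"
  proof (cases "t \<le> 0")
    case True
    have "t \<le> 1 / real (Suc n)" for n
      using True by (smt (verit) of_nat_0_less_iff zero_less_Suc zero_less_divide_1_iff)
    then show ?thesis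
      using True by (simp add: H0_approx_def step_fun_def H0_def)
  next
    case False
    have "(\<lambda>n. 1 / real (Suc n)) \<longlonglongrightarrow> 0"
      using LIMSEQ_inverse_real_of_nat by (simp add: inverse_eq_divide)
    then have "eventually (\<lambda>n. 1 / real (Suc n) < t) sequentially"
      using False by (intro order_tendstoD(2)) auto
    then have "eventually (\<lambda>n. H0_approx n (ereal t) = 1 - 1 / real (Suc n)) sequentially"
      by eventually_elim (auto simp: H0_approx_def step_fun_def)
    moreover have "(\<lambda>n. 1 - 1 / real (Suc n)) \<longlonglongrightarrow> 1 - 0"
      using \<open>(\<lambda>n. 1 / real (Suc n)) \<longlonglongrightarrow> 0\<close> by (intro tendsto_diff tendsto_const)
    ultimately show ?thesis
      using False by (simp add: H0_def tendsto_cong)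
  qed
qed

lemma dsup_bdd_above: "S \<subseteq> Delta_plus \<Longrightarrow> bdd_above ((\<lambda>F. F t) ` S)"
  by (rule bdd_aboveI[of _ 1]) (auto intro: Delta_plus_le_one)

lemma dsup_upper: "S \<subseteq> Delta_plus \<Longrightarrow> F \<in> S \<Longrightarrow> F \<le> dsup S"
  unfolding dsup_def le_fun_def by (auto intro!: cSUP_upper dsup_bdd_above)

lemma dsup_least: "S \<noteq> {} \<Longrightarrow> (\<And>F. F \<in> S \<Longrightarrow> F \<le> G) \<Longrightarrow> dsup S \<le> G"
  unfolding dsup_def le_fun_def by (auto intro!: cSUP_least)

lemma dsup_mono:
  assumes "S \<subseteq> Delta_plus"
  shows "mono (dsup S)"
proof (cases "S = {}")
  case False
  then show ?thesis
    unfolding mono_def dsup_def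
    using assms by (auto intro!: cSUP_mono dsup_bdd_above) (meson Delta_plus_mono subsetD)
qed (simp add: dsup_def mono_def)

lemma dsup_left_continuous:
  assumes S: "S \<subseteq> Delta_plus" "S \<noteq> {}"
  shows "((\<lambda>s. dsup S (ereal s)) \<longlongrightarrow> dsup S (ereal t)) (at_left t)"
proof (rule order_tendstoI)
  fix a assume "a < dsup S (ereal t)"
  then obtain F where F: "F \<in> S" "a < F (ereal t)"
    unfolding dsup_def using less_cSUP_iff[OF S(2) dsup_bdd_above[OF S(1)]] by blast
  have "eventually (\<lambda>s. a < F (ereal s)) (at_left t)"
    using order_tendstoD(1)[OF Delta_plus_left_continuous[of F t] F(2)] F(1) S(1) by blast
  moreover have "F (ereal s) \<le> dsup S (ereal s)" for s
    using dsup_upper[OF S(1) F(1)] by (simp add: le_fun_def)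
  ultimately show "eventually (\<lambda>s. a < dsup S (ereal s)) (at_left t)"
    by (metis (mono_tags, lifting) eventually_mono order.strict_trans2)
next
  fix a assume a: "dsup S (ereal t) < a"
  have "eventually (\<lambda>s. s \<in> {t-1<..<t}) (at_left t)"
    by (rule eventually_at_left_real) simp
  moreover have "dsup S (ereal s) \<le> dsup S (ereal t)" if "s < t" for s
    using dsup_mono[OF S(1)] that by (simp add: mono_def)
  ultimately show "eventually (\<lambda>s. dsup S (ereal s) < a) (at_left t)"
    using a by (metis (mono_tags, lifting) eventually_mono greaterThanLessThan_iff order.strict_trans1)
qed

lemma dsup_Delta_plus:
  assumes S: "S \<subseteq> Delta_plus" "S \<noteq> {}"
  shows "dsup S \<in> Delta_plus"
proof -
  have bounds: "0 \<le> dsup S t \<and> dsup S t \<le> 1" for t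
  proof
    obtain F where "F \<in> S"
      using S by blast
    then have "F t \<le> dsup S t"
      using dsup_upper[OF S(1)] by (simp add: le_fun_def)
    then show "0 \<le> dsup S t"
      using Delta_plus_nonneg[of F t] \<open>F \<in> S\<close> S(1) by auto
    show "dsup S t \<le> 1"
      unfolding dsup_def by (rule cSUP_least[OF S(2)]) (meson Delta_plus_le_one S(1) subsetD)
  qed
  have const: "dsup S t = c" if "\<forall>F\<in>S. F t = c" for t c
  proof -
    have "(SUP F\<in>S. F t) = (SUP F\<in>S. c)"
      using that by (intro SUP_cong) auto
    then show ?thesis
      using S(2) by (simp add: dsup_def)
  qed
  have "dsup S (-\<infinity>) = 0" "dsup S \<infinity> = 1" "dsup S 0 = 0"
    using S by (auto intro!: const simp: Delta_plus_def distribution_fun_def)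
  then show ?thesis
    using dsup_mono[OF S(1)] dsup_left_continuous[OF S] bounds
    by (auto simp: Delta_plus_def distribution_fun_def)
qed

lemma wconv_const: "wconv (\<lambda>n. F) F net"
  by (simp add: wconv_def)

text \<open>A weak limit is identified only at continuity points, so an upper bound at a point
  \<open>r\<close> is recovered from continuity points just left of \<open>r\<close>, using left-continuity at \<open>r\<close>.\<close>

lemma wconv_le:
  assumes Fs: "\<And>n. Fs n \<le> G" and w: "wconv Fs F sequentially"
    and F: "F \<in> Delta_plus" and G: "G \<in> Delta_plus"
  shows "F \<le> G"
proof (rule le_funI)
  fix t
  show "F t \<le> G t"
  proof (cases t)
    case (real r)
    show ?thesis
    proof (rule ccontr)
      assume "\<not> F t \<le> G t"
      then have "G (ereal r) < F (ereal r)" using real by simp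
      from order_tendstoD(1)[OF Delta_plus_left_continuous[OF F] this]
      obtain b where b: "b < r" "\<And>y. b < y \<Longrightarrow> y < r \<Longrightarrow> G (ereal r) < F (ereal y)"
        by (auto simp: eventually_at_left_field)
      obtain c where c: "b < c" "c < r" "isCont (\<lambda>s. F (ereal s)) c"
        using Delta_plus_continuity_point_between[OF F b(1)] by blast
      have "(\<lambda>n. Fs n (ereal c)) \<longlonglongrightarrow> F (ereal c)"
        using w c(3) by (simp add: wconv_def)
      then have "F (ereal c) \<le> G (ereal c)"
        by (rule LIMSEQ_le_const2) (use Fs in \<open>auto simp: le_fun_def\<close>)
      also have "\<dots> \<le> G (ereal r)"
        using c(2) by (intro Delta_plus_mono[OF G]) simp
      finally show False
        using b(2)[OF c(1,2)] by simp
    qed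
  qed (use F G in \<open>simp_all add: Delta_plus_infinity Delta_plus_nonpos\<close>)
qed

lemma wconv_H0_squeeze:
  assumes le: "\<And>n. Fs n \<le> Gs n" and Gs: "\<And>n. Gs n \<in> Delta_plus"
    and w: "wconv Fs H0 sequentially"
  shows "wconv Gs H0 sequentially"
  unfolding wconv_def
proof (intro allI impI)
  fix t :: real
  assume "isCont (\<lambda>s. H0 (ereal s)) t"
  then have lim: "(\<lambda>n. Fs n (ereal t)) \<longlonglongrightarrow> H0 (ereal t)"
    using w by (simp add: wconv_def)
  have "Fs n (ereal t) \<le> Gs n (ereal t)" "Gs n (ereal t) \<le> H0 (ereal t)" for n
    using le[of n] Delta_plus_le_H0[OF Gs, of n] by (simp_all add: le_fun_def)
  then show "(\<lambda>n. Gs n (ereal t)) \<longlonglongrightarrow> H0 (ereal t)"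
    by (intro tendsto_sandwich[OF _ _ lim tendsto_const]) (simp_all add: always_eventually)
qed

locale triangle_fun =
  fixes T :: "dfun \<Rightarrow> dfun \<Rightarrow> dfun"
  assumes triangle_function: "triangle_function T"
begin

lemma T_Delta_plus: "F \<in> Delta_plus \<Longrightarrow> L \<in> Delta_plus \<Longrightarrow> T F L \<in> Delta_plus"
  using triangle_function by (simp add: triangle_function_def)

lemma T_commute: "F \<in> Delta_plus \<Longrightarrow> L \<in> Delta_plus \<Longrightarrow> T F L = T L F"
  using triangle_function by (simp add: triangle_function_def)

lemma T_assoc:
  "F \<in> Delta_plus \<Longrightarrow> L \<in> Delta_plus \<Longrightarrow> K \<in> Delta_plus \<Longrightarrow> T (T F L) K = T F (T L K)"
  using triangle_function unfolding triangle_function_def by blast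

lemma T_mono_left:
  "F \<in> Delta_plus \<Longrightarrow> F' \<in> Delta_plus \<Longrightarrow> L \<in> Delta_plus \<Longrightarrow> F \<le> F' \<Longrightarrow> T F L \<le> T F' L"
  using triangle_function by (simp add: triangle_function_def)

lemma T_mono_right:
  "F \<in> Delta_plus \<Longrightarrow> L \<in> Delta_plus \<Longrightarrow> L' \<in> Delta_plus \<Longrightarrow> L \<le> L' \<Longrightarrow> T F L \<le> T F L'"
  using T_mono_left[of L L' F] T_commute by metis

lemma T_mono:
  "F \<in> Delta_plus \<Longrightarrow> F' \<in> Delta_plus \<Longrightarrow> L \<in> Delta_plus \<Longrightarrow> L' \<in> Delta_plus
    \<Longrightarrow> F \<le> F' \<Longrightarrow> L \<le> L' \<Longrightarrow> T F L \<le> T F' L'"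
  by (meson T_mono_left T_mono_right order_trans)

lemma T_H0_right: "F \<in> Delta_plus \<Longrightarrow> T F H0 = F"
  using triangle_function by (simp add: triangle_function_def)

lemma T_H0_left: "F \<in> Delta_plus \<Longrightarrow> T H0 F = F"
  using T_H0_right T_commute H0_Delta_plus by metis

lemma T_le_left: "F \<in> Delta_plus \<Longrightarrow> L \<in> Delta_plus \<Longrightarrow> T F L \<le> F"
  using T_mono_right[of F L H0] T_H0_right H0_Delta_plus Delta_plus_le_H0 by metis

lemma T_le_right: "F \<in> Delta_plus \<Longrightarrow> L \<in> Delta_plus \<Longrightarrow> T F L \<le> L"
  using T_le_left T_commute by metis

lemma wconv_T_H0_right:
  assumes "continuous_tf T" "\<And>n. Fs n \<in> Delta_plus" "\<And>n. Ls n \<in> Delta_plus" "F \<in> Delta_plus"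
    and "wconv Fs F sequentially" "wconv Ls H0 sequentially"
  shows "wconv (\<lambda>n. T (Fs n) (Ls n)) F sequentially"
proof -
  have "wconv (\<lambda>n. T (Fs n) (Ls n)) (T F H0) sequentially"
    using assms H0_Delta_plus unfolding continuous_tf_def by blast
  then show ?thesis
    using T_H0_right[OF assms(4)] by simp
qed

lemma wconv_T_const_H0:
  assumes "continuous_tf T" "\<And>n. Ls n \<in> Delta_plus" "F \<in> Delta_plus" "wconv Ls H0 sequentially"
  shows "wconv (\<lambda>n. T F (Ls n)) F sequentially"
  using wconv_T_H0_right[OF assms(1) _ assms(2,3) wconv_const assms(4)] assms(3) .

end

section \<open>The monoid of 1-Lipschitz maps\<close>

locale pm_group = triangle_fun T for T +
  fixes G (structure) and D :: "'a \<Rightarrow> 'a \<Rightarrow> dfun"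
  assumes inv_pm_group: "inv_pm_group G D T"
begin

sublocale group G
  using inv_pm_group by (simp add: inv_pm_group_def)

lemma D_Delta_plus: "p \<in> carrier G \<Longrightarrow> q \<in> carrier G \<Longrightarrow> D p q \<in> Delta_plus"
  using inv_pm_group by (simp add: inv_pm_group_def pm_space_def)

lemma D_eq_H0_iff: "p \<in> carrier G \<Longrightarrow> q \<in> carrier G \<Longrightarrow> D p q = H0 \<longleftrightarrow> p = q"
  using inv_pm_group by (simp add: inv_pm_group_def pm_space_def)

lemma D_self: "p \<in> carrier G \<Longrightarrow> D p p = H0"
  using D_eq_H0_iff by blast

lemma D_commute: "p \<in> carrier G \<Longrightarrow> q \<in> carrier G \<Longrightarrow> D p q = D q p"
  using inv_pm_group by (simp add: inv_pm_group_def pm_space_def)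

lemma D_triangle:
  "p \<in> carrier G \<Longrightarrow> q \<in> carrier G \<Longrightarrow> r \<in> carrier G \<Longrightarrow> T (D p q) (D q r) \<le> D p r"
  using inv_pm_group by (simp add: inv_pm_group_def pm_space_def)

lemma D_mult_right:
  "p \<in> carrier G \<Longrightarrow> q \<in> carrier G \<Longrightarrow> r \<in> carrier G \<Longrightarrow> D (p \<otimes> r) (q \<otimes> r) = D p q"
  using inv_pm_group by (simp add: inv_pm_group_def)

lemma D_mult_left:
  "p \<in> carrier G \<Longrightarrow> q \<in> carrier G \<Longrightarrow> r \<in> carrier G \<Longrightarrow> D (r \<otimes> p) (r \<otimes> q) = D p q"
  using inv_pm_group by (simp add: inv_pm_group_def)

lemma D_one_mult_inv: "p \<in> carrier G \<Longrightarrow> q \<in> carrier G \<Longrightarrow> D \<one> (p \<otimes> inv q) = D q p"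
  using D_mult_right[of \<one> "p \<otimes> inv q" q] by (simp add: m_assoc)

abbreviation Lip :: "('a \<Rightarrow> dfun) set" where
  "Lip \<equiv> Lip1 T (carrier G) D"

lemma Lip1_Delta_plus: "f \<in> Lip \<Longrightarrow> x \<in> carrier G \<Longrightarrow> f x \<in> Delta_plus"
  by (auto simp: Lip1_def)

lemma Lip1_le: "f \<in> Lip \<Longrightarrow> x \<in> carrier G \<Longrightarrow> y \<in> carrier G \<Longrightarrow> T (D x y) (f y) \<le> f x"
  by (auto simp: Lip1_def)

lemma Lip1_extensional: "f \<in> Lip \<Longrightarrow> f \<in> extensional (carrier G)"
  by (auto simp: Lip1_def PiE_def)

definition dist_from :: "'a \<Rightarrow> 'a \<Rightarrow> dfun" where
  "dist_from a = restrict (D a) (carrier G)"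

lemma dist_from_Lip1:
  assumes a: "a \<in> carrier G"
  shows "dist_from a \<in> Lip"
proof -
  have "T (D x y) (D a y) \<le> D a x" if "x \<in> carrier G" "y \<in> carrier G" for x y
    using D_triangle[OF that a] that a by (simp add: D_commute[of a])
  then show ?thesis
    using a D_Delta_plus by (auto simp: Lip1_def dist_from_def)
qed

lemma dist_from_inj: "a \<in> carrier G \<Longrightarrow> b \<in> carrier G \<Longrightarrow> dist_from a = dist_from b \<Longrightarrow> a = b"
  by (metis D_eq_H0_iff D_self dist_from_def restrict_apply')

definition odot_terms :: "('a \<Rightarrow> dfun) \<Rightarrow> ('a \<Rightarrow> dfun) \<Rightarrow> 'a \<Rightarrow> dfun set" where
  "odot_terms f g x = {T (f y) (g z) | y z. y \<in> carrier G \<and> z \<in> carrier G \<and> y \<otimes> z = x}"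

lemma odot_eq_dsup: "x \<in> carrier G \<Longrightarrow> odot T G f g x = dsup (odot_terms f g x)"
  by (simp add: odot_def odot_terms_def)

lemma odot_extensional: "odot T G f g \<in> extensional (carrier G)"
  by (simp add: odot_def)

lemma odot_terms_Delta_plus: "f \<in> Lip \<Longrightarrow> g \<in> Lip \<Longrightarrow> odot_terms f g x \<subseteq> Delta_plus"
  by (auto simp: odot_terms_def T_Delta_plus Lip1_Delta_plus)

lemma odot_terms_mem: "y \<in> carrier G \<Longrightarrow> z \<in> carrier G \<Longrightarrow> T (f y) (g z) \<in> odot_terms f g (y \<otimes> z)"
  by (auto simp: odot_terms_def)

lemma odot_terms_nonempty: "x \<in> carrier G \<Longrightarrow> odot_terms f g x \<noteq> {}"
  using odot_terms_mem[of \<one> x f g] by auto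

lemma odot_upper:
  "f \<in> Lip \<Longrightarrow> g \<in> Lip \<Longrightarrow> y \<in> carrier G \<Longrightarrow> z \<in> carrier G \<Longrightarrow> T (f y) (g z) \<le> odot T G f g (y \<otimes> z)"
  using odot_eq_dsup[of "y \<otimes> z" f g] dsup_upper[OF odot_terms_Delta_plus odot_terms_mem] by simp

lemma odot_least:
  "x \<in> carrier G \<Longrightarrow> (\<And>y z. y \<in> carrier G \<Longrightarrow> z \<in> carrier G \<Longrightarrow> y \<otimes> z = x \<Longrightarrow> T (f y) (g z) \<le> H)
    \<Longrightarrow> odot T G f g x \<le> H"
  unfolding odot_eq_dsup by (rule dsup_least[OF odot_terms_nonempty]) (auto simp: odot_terms_def)

lemma odot_dist_from:
  assumes a: "a \<in> carrier G" and b: "b \<in> carrier G"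
  shows "odot T G (dist_from a) (dist_from b) = dist_from (a \<otimes> b)"
proof (rule extensionalityI[OF odot_extensional])
  show "dist_from (a \<otimes> b) \<in> extensional (carrier G)"
    by (simp add: dist_from_def)
  fix x assume x: "x \<in> carrier G"
  show "odot T G (dist_from a) (dist_from b) x = dist_from (a \<otimes> b) x"
  proof (rule antisym)
    show "odot T G (dist_from a) (dist_from b) x \<le> dist_from (a \<otimes> b) x"
    proof (rule odot_least[OF x])
      fix y z assume yz: "y \<in> carrier G" "z \<in> carrier G" "y \<otimes> z = x"
      have "D a y = D (a \<otimes> b) (y \<otimes> b)" "D b z = D (y \<otimes> b) x"
        using D_mult_right[OF a yz(1) b] D_mult_left[OF b yz(2) yz(1)] yz(3) by simp_all
      then show "T (dist_from a y) (dist_from b z) \<le> dist_from (a \<otimes> b) x"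
        using D_triangle[of "a \<otimes> b" "y \<otimes> b" x] yz a b x by (simp add: dist_from_def)
    qed
  next
    have "D (a \<otimes> b) x = D (a \<otimes> b) (a \<otimes> (inv a \<otimes> x))"
      using a x by (simp add: m_assoc[symmetric])
    also have "\<dots> = T (D a a) (D b (inv a \<otimes> x))"
      using D_mult_left a b x D_self[OF a] T_H0_left[OF D_Delta_plus[OF b, of "inv a \<otimes> x"]] by simp
    also have "\<dots> \<le> odot T G (dist_from a) (dist_from b) (a \<otimes> (inv a \<otimes> x))"
      using odot_upper[OF dist_from_Lip1 dist_from_Lip1, of a b a "inv a \<otimes> x"] a b x
      by (simp add: dist_from_def)
    finally show "dist_from (a \<otimes> b) x \<le> odot T G (dist_from a) (dist_from b) x"
      using a b x by (simp add: dist_from_def m_assoc[symmetric])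
  qed
qed

lemma odot_dist_from_one_left:
  assumes u: "u \<in> Lip"
  shows "odot T G (dist_from \<one>) u = u"
proof (rule extensionalityI[OF odot_extensional Lip1_extensional[OF u]])
  fix x assume x: "x \<in> carrier G"
  show "odot T G (dist_from \<one>) u x = u x"
  proof (rule antisym)
    show "odot T G (dist_from \<one>) u x \<le> u x"
    proof (rule odot_least[OF x])
      fix y z assume yz: "y \<in> carrier G" "z \<in> carrier G" "y \<otimes> z = x"
      have "D \<one> y = D x z"
        using D_mult_right[of \<one> y z] D_commute[of z x] yz x by simp
      then show "T (dist_from \<one> y) (u z) \<le> u x"
        using Lip1_le[OF u x yz(2)] yz by (simp add: dist_from_def)
    qed
  next
    have "u x = T (dist_from \<one> \<one>) (u x)"
      using T_H0_left[OF Lip1_Delta_plus[OF u x]] by (simp add: dist_from_def D_self)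
    also have "\<dots> \<le> odot T G (dist_from \<one>) u (\<one> \<otimes> x)"
      by (rule odot_upper) (use x u dist_from_Lip1 in auto)
    finally show "u x \<le> odot T G (dist_from \<one>) u x"
      using x by simp
  qed
qed

lemma odot_dist_from_one_right:
  assumes u: "u \<in> Lip"
  shows "odot T G u (dist_from \<one>) = u"
proof (rule extensionalityI[OF odot_extensional Lip1_extensional[OF u]])
  fix x assume x: "x \<in> carrier G"
  show "odot T G u (dist_from \<one>) x = u x"
  proof (rule antisym)
    show "odot T G u (dist_from \<one>) x \<le> u x"
    proof (rule odot_least[OF x])
      fix y z assume yz: "y \<in> carrier G" "z \<in> carrier G" "y \<otimes> z = x"
      have "D \<one> z = D x y"
        using D_mult_left[of \<one> z y] D_commute[of y x] yz x by simp
      then show "T (u y) (dist_from \<one> z) \<le> u x"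
        using Lip1_le[OF u x yz(1)] yz x T_commute[OF Lip1_Delta_plus[OF u yz(1)] D_Delta_plus[OF x yz(1)]]
        by (simp add: dist_from_def)
    qed
  next
    have "u x = T (u x) (dist_from \<one> \<one>)"
      using T_H0_right[OF Lip1_Delta_plus[OF u x]] by (simp add: dist_from_def D_self)
    also have "\<dots> \<le> odot T G u (dist_from \<one>) (x \<otimes> \<one>)"
      by (rule odot_upper) (use x u dist_from_Lip1 in auto)
    finally show "u x \<le> odot T G u (dist_from \<one>) x"
      using x by simp
  qed
qed

text \<open>Left invariance gives \<open>D(x, y z) = D(y\<inverse> x, z)\<close>, so the Lipschitz inequality of \<open>g\<close>
  at \<open>y\<inverse> x\<close> absorbs the distance.\<close>

lemma odot_term_le:
  assumes f: "f \<in> Lip" and g: "g \<in> Lip"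
    and x: "x \<in> carrier G" and y: "y \<in> carrier G" and z: "z \<in> carrier G"
  shows "T (T (f y) (g z)) (D x (y \<otimes> z)) \<le> odot T G f g x"
proof -
  define x' where "x' = inv y \<otimes> x"
  have x': "x' \<in> carrier G" "y \<otimes> x' = x"
    using y x by (simp_all add: x'_def m_assoc[symmetric])
  have "D x (y \<otimes> z) = D (y \<otimes> x') (y \<otimes> z)"
    using x' by simp
  then have Dx: "D x (y \<otimes> z) = D x' z"
    using D_mult_left[OF x'(1) z y] by simp
  have fy: "f y \<in> Delta_plus" and gz: "g z \<in> Delta_plus" and Dz: "D x' z \<in> Delta_plus"
    using Lip1_Delta_plus f g y z D_Delta_plus x' by auto
  have "T (T (f y) (g z)) (D x (y \<otimes> z)) = T (f y) (T (D x' z) (g z))"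
    using T_assoc[OF fy gz Dz] T_commute[OF gz Dz] Dx by simp
  also have "\<dots> \<le> T (f y) (g x')"
    using T_mono_right[OF fy T_Delta_plus[OF Dz gz] Lip1_Delta_plus[OF g x'(1)] Lip1_le[OF g x'(1) z]] .
  also have "\<dots> \<le> odot T G f g x"
    using odot_upper[OF f g y x'(1)] x'(2) by simp
  finally show ?thesis .
qed

lemma odot_Lip1:
  assumes supc: "sup_continuous_tf T" and f: "f \<in> Lip" and g: "g \<in> Lip"
  shows "odot T G f g \<in> Lip"
proof -
  have S: "odot_terms f g w \<subseteq> Delta_plus" "odot_terms f g w \<noteq> {}" if "w \<in> carrier G" for w
    using odot_terms_Delta_plus[OF f g] odot_terms_nonempty that by auto
  have "T (D x w) (odot T G f g w) \<le> odot T G f g x" if x: "x \<in> carrier G" and w: "w \<in> carrier G" for x w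
  proof -
    have Dxw: "D x w \<in> Delta_plus"
      using D_Delta_plus x w by simp
    have "T (D x w) (odot T G f g w) = dsup ((\<lambda>F. T F (D x w)) ` odot_terms f g w)"
      using supc S[OF w] Dxw T_commute[OF Dxw dsup_Delta_plus[OF S[OF w]]] odot_eq_dsup[OF w]
      unfolding sup_continuous_tf_def by simp
    also have "\<dots> \<le> odot T G f g x"
    proof (rule dsup_least)
      show "(\<lambda>F. T F (D x w)) ` odot_terms f g w \<noteq> {}"
        using S[OF w] by simp
    next
      fix F assume "F \<in> (\<lambda>F. T F (D x w)) ` odot_terms f g w"
      then show "F \<le> odot T G f g x"
        using odot_term_le[OF f g x] by (auto simp: odot_terms_def)
    qed
    finally show ?thesis .
  qed
  moreover have "odot T G f g x \<in> Delta_plus" if "x \<in> carrier G" for x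
    using odot_eq_dsup[OF that] dsup_Delta_plus[OF S[OF that]] by simp
  ultimately show ?thesis
    using odot_extensional by (auto simp: Lip1_def PiE_iff)
qed

lemma dist_from_PiG:
  assumes a: "a \<in> carrier G"
  shows "dist_from a \<in> PiG T (carrier G) D"
proof -
  have "pm_cauchy (carrier G) D (\<lambda>n. a)"
    using a by (simp add: pm_cauchy_def D_self wconv_def case_prod_beta)
  moreover have "\<forall>x\<in>carrier G. wconv (\<lambda>n. D a x) (dist_from a x) sequentially"
    by (simp add: dist_from_def wconv_def)
  ultimately show ?thesis
    using dist_from_Lip1[OF a] unfolding PiG_def by blast
qed

lemma DD_dist_from:
  assumes a: "a \<in> carrier G" and b: "b \<in> carrier G"
  shows "DD T (carrier G) (dist_from a) (dist_from b) = D a b"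
proof -
  let ?S = "(\<lambda>x. T (D a x) (D b x)) ` carrier G"
  have eq: "(\<lambda>x. T (dist_from a x) (dist_from b x)) ` carrier G = ?S"
    by (rule image_cong) (auto simp: dist_from_def)
  have "dsup ?S \<le> D a b"
    by (rule dsup_least) (use D_triangle[OF a _ b] D_commute[OF b] in auto)
  moreover have "D a b \<le> dsup ?S"
  proof -
    have "D a b = T (D a a) (D b a)"
      using a b by (simp add: D_self T_H0_left D_Delta_plus D_commute[of b a])
    also have "\<dots> \<le> dsup ?S"
      by (rule dsup_upper) (use a b D_Delta_plus T_Delta_plus in auto)
    finally show ?thesis .
  qed
  ultimately show ?thesis
    unfolding DD_def eq by (rule antisym)
qed

lemma pm_cauchyI_lower_bound:
  assumes y: "\<And>n. y n \<in> carrier G" and Q: "wconv Q H0 sequentially"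
    and le: "\<And>n m. Q (min n m) \<le> D (y n) (y m)"
  shows "pm_cauchy (carrier G) D y"
  unfolding pm_cauchy_def wconv_def
proof (intro conjI allI impI)
  show "range y \<subseteq> carrier G"
    using y by auto
  fix t :: real
  show "((\<lambda>i. (case i of (n, p) \<Rightarrow> D (y n) (y p)) (ereal t)) \<longlongrightarrow> H0 (ereal t))
      (sequentially \<times>\<^sub>F sequentially)"
  proof (cases "t \<le> 0")
    case True
    then show ?thesis
      using y by (simp add: split_beta H0_def Delta_plus_nonpos D_Delta_plus)
  next
    case False
    have "(\<lambda>j. Q j (ereal t)) \<longlonglongrightarrow> H0 (ereal t)"
      using Q isCont_H0[of t] False by (simp add: wconv_def)
    then have "(\<lambda>j. Q j (ereal t)) \<longlonglongrightarrow> 1"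
      using False by (simp add: H0_def)
    moreover have "filterlim (\<lambda>i. min (fst i) (snd i)) sequentially (sequentially \<times>\<^sub>F sequentially)"
      unfolding filterlim_at_top eventually_prod_sequentially by auto
    ultimately have "((\<lambda>i. Q (min (fst i) (snd i)) (ereal t)) \<longlongrightarrow> 1) (sequentially \<times>\<^sub>F sequentially)"
      by (rule filterlim_compose)
    then have "((\<lambda>i. D (y (fst i)) (y (snd i)) (ereal t)) \<longlongrightarrow> 1) (sequentially \<times>\<^sub>F sequentially)"
      by (rule tendsto_sandwich[rotated 2, OF _ tendsto_const])
        (use le y in \<open>auto simp: le_fun_def Delta_plus_le_one D_Delta_plus\<close>)
    then show ?thesis
      using False by (simp add: split_beta H0_def)
  qed
qed

lemma odot_eq_dist_from_one_le:
  assumes "h \<in> Lip" "k \<in> Lip" "odot T G h k = dist_from \<one>" "p \<in> carrier G" "q \<in> carrier G"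
  shows "T (h p) (k q) \<le> D \<one> (p \<otimes> q)"
  using odot_upper[of h k p q] assms by (simp add: dist_from_def)

lemma odot_eq_dist_from_one_approx:
  assumes h: "h \<in> Lip" and k: "k \<in> Lip" and hk: "odot T G h k = dist_from \<one>"
  obtains y where "\<And>n. y n \<in> carrier G" "\<And>n. H0_approx n \<le> h (y n)"
    "\<And>n. H0_approx n \<le> k (inv (y n))"
proof -
  have "\<exists>y\<in>carrier G. H0_approx n \<le> h y \<and> H0_approx n \<le> k (inv y)" for n
  proof -
    let ?c = "ereal (1 / real (Suc n))"
    have "dsup (odot_terms h k \<one>) = H0"
      using hk odot_eq_dsup[of \<one> h k] by (simp add: dist_from_def D_self)
    then have "dsup (odot_terms h k \<one>) ?c = 1"
      by (simp add: H0_def)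
    then have "1 - 1 / real (Suc n) < (SUP F\<in>odot_terms h k \<one>. F ?c)"
      by (simp add: dsup_def)
    then obtain F where F: "F \<in> odot_terms h k \<one>" "1 - 1 / real (Suc n) < F ?c"
      using less_cSUP_iff[OF odot_terms_nonempty dsup_bdd_above[OF odot_terms_Delta_plus[OF h k]]]
      by blast
    then obtain y z where yz: "y \<in> carrier G" "z \<in> carrier G" "y \<otimes> z = \<one>" "F = T (h y) (k z)"
      by (auto simp: odot_terms_def)
    then have z: "z = inv y"
      using inv_equality inv_comm by metis
    have hy: "h y \<in> Delta_plus" and kz: "k z \<in> Delta_plus"
      using Lip1_Delta_plus h k yz by auto
    have "H0_approx n \<le> F"
      using H0_approx_le[of F n] T_Delta_plus[OF hy kz] yz(4) F(2) by simp
    then show ?thesis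
      using yz z T_le_left[OF hy kz] T_le_right[OF hy kz] order_trans by blast
  qed
  then show ?thesis
    using that by metis
qed

lemma dist_limit_le_Lip1:
  assumes cont: "continuous_tf T" and h: "h \<in> Lip"
    and y: "\<And>n. y n \<in> carrier G" and b: "b \<in> carrier G" and x: "x \<in> carrier G"
    and hy: "wconv (\<lambda>n. h (y n)) H0 sequentially" and yb: "wconv (\<lambda>n. D (y n) b) H0 sequentially"
  shows "D x b \<le> h x"
proof -
  have yb': "wconv (\<lambda>n. D b (y n)) H0 sequentially"
    using yb D_commute[OF b y] by simp
  have Dxb: "D x b \<in> Delta_plus" and Dby: "D b (y n) \<in> Delta_plus" and hyn: "h (y n) \<in> Delta_plus" for n
    using D_Delta_plus Lip1_Delta_plus[OF h] x y b by auto
  define R where "R n = T (D x b) (T (D b (y n)) (h (y n)))" for n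
  have "R n \<le> h x" for n
  proof -
    have "R n = T (T (D x b) (D b (y n))) (h (y n))"
      unfolding R_def using T_assoc[OF Dxb Dby hyn] by simp
    also have "\<dots> \<le> T (D x (y n)) (h (y n))"
      using T_mono_left[OF T_Delta_plus[OF Dxb Dby] D_Delta_plus[OF x y] hyn D_triangle[OF x b y]] .
    also have "\<dots> \<le> h x"
      by (rule Lip1_le[OF h x y])
    finally show ?thesis .
  qed
  moreover have "wconv R (D x b) sequentially"
  proof -
    have "wconv (\<lambda>n. T (D b (y n)) (h (y n))) H0 sequentially"
      by (rule wconv_T_H0_right[OF cont Dby hyn H0_Delta_plus yb' hy])
    then show ?thesis
      unfolding R_def by (rule wconv_T_const_H0[OF cont T_Delta_plus[OF Dby hyn] Dxb])
  qed
  ultimately show ?thesis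
    using wconv_le Dxb Lip1_Delta_plus[OF h x] by blast
qed

lemma Lip1_le_dist_limit:
  assumes cont: "continuous_tf T" and h: "h \<in> Lip" and k: "k \<in> Lip"
    and hk: "odot T G h k = dist_from \<one>"
    and y: "\<And>n. y n \<in> carrier G" and b: "b \<in> carrier G" and x: "x \<in> carrier G"
    and ky: "wconv (\<lambda>n. k (inv (y n))) H0 sequentially" and yb: "wconv (\<lambda>n. D (y n) b) H0 sequentially"
  shows "h x \<le> D x b"
proof -
  have hx: "h x \<in> Delta_plus" and kyn: "k (inv (y n)) \<in> Delta_plus" for n
    using Lip1_Delta_plus h k x y by auto
  have Dyb: "D (y n) b \<in> Delta_plus" and Dyx: "D (y n) x \<in> Delta_plus" for n
    using D_Delta_plus x y b by auto
  define P where "P n = T (T (h x) (k (inv (y n)))) (D (y n) b)" for n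
  have "P n \<le> D x b" for n
  proof -
    have "T (h x) (k (inv (y n))) \<le> D (y n) x"
      using odot_eq_dist_from_one_le[OF h k hk x, of "inv (y n)"] D_one_mult_inv[OF x y] y by simp
    then have "P n \<le> T (D (y n) x) (D (y n) b)"
      unfolding P_def using T_mono_left T_Delta_plus hx kyn Dyb Dyx by blast
    also have "\<dots> \<le> D x b"
      using D_triangle[OF x y b] D_commute[OF x y] by simp
    finally show ?thesis .
  qed
  moreover have "wconv P (h x) sequentially"
    unfolding P_def
    by (rule wconv_T_H0_right[OF cont T_Delta_plus[OF hx kyn] Dyb hx
          wconv_T_const_H0[OF cont kyn hx ky] yb])
  ultimately show ?thesis
    using wconv_le hx D_Delta_plus[OF x b] by blast
qed

lemma pm_cauchy_of_odot_eq_dist_from_one: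
  assumes cont: "continuous_tf T"
    and h: "h \<in> Lip" and k: "k \<in> Lip" and hk: "odot T G h k = dist_from \<one>"
    and y: "\<And>n. y n \<in> carrier G" and hy: "\<And>n. H0_approx n \<le> h (y n)"
    and ky: "\<And>n. H0_approx n \<le> k (inv (y n))"
  shows "pm_cauchy (carrier G) D y"
proof -
  have "T (H0_approx (min n m)) (H0_approx (min n m)) \<le> D (y n) (y m)" for n m
  proof -
    have "T (H0_approx (min n m)) (H0_approx (min n m)) \<le> T (h (y n)) (k (inv (y m)))"
      using T_mono[OF H0_approx_Delta_plus Lip1_Delta_plus[OF h y] H0_approx_Delta_plus
          Lip1_Delta_plus[OF k inv_closed[OF y]]]
        order_trans[OF H0_approx_mono hy] order_trans[OF H0_approx_mono ky] by simp
    also have "\<dots> \<le> D \<one> (y n \<otimes> inv (y m))"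
      by (rule odot_eq_dist_from_one_le[OF h k hk y inv_closed[OF y]])
    also have "\<dots> = D (y n) (y m)"
      by (simp add: D_one_mult_inv D_commute[of "y m" "y n"] y)
    finally show ?thesis .
  qed
  moreover have "wconv (\<lambda>j. T (H0_approx j) (H0_approx j)) H0 sequentially"
    by (rule wconv_T_H0_right[OF cont H0_approx_Delta_plus H0_approx_Delta_plus H0_Delta_plus
          wconv_H0_approx wconv_H0_approx])
  ultimately show ?thesis
    using pm_cauchyI_lower_bound[of y] y by blast
qed

lemma odot_eq_dist_from_one_imp_dist_from:
  assumes cont: "continuous_tf T" and complete: "pm_complete (carrier G) D"
    and h: "h \<in> Lip" and k: "k \<in> Lip" and hk: "odot T G h k = dist_from \<one>"
  shows "\<exists>b\<in>carrier G. h = dist_from b"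
proof -
  obtain y where y: "\<And>n. y n \<in> carrier G" and hy: "\<And>n. H0_approx n \<le> h (y n)"
    and ky: "\<And>n. H0_approx n \<le> k (inv (y n))"
    using odot_eq_dist_from_one_approx[OF h k hk] by blast
  then have "pm_cauchy (carrier G) D y"
    by (rule pm_cauchy_of_odot_eq_dist_from_one[OF cont h k hk])
  then obtain b where b: "b \<in> carrier G" and yb: "wconv (\<lambda>n. D (y n) b) H0 sequentially"
    using complete unfolding pm_complete_def by blast
  have "h x = dist_from b x" if x: "x \<in> carrier G" for x
  proof (rule antisym)
    show "h x \<le> dist_from b x"
      using Lip1_le_dist_limit[OF cont h k hk y b x _ yb]
        wconv_H0_squeeze[OF ky Lip1_Delta_plus[OF k inv_closed[OF y]] wconv_H0_approx] x b
      by (simp add: dist_from_def D_commute[OF x b])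
    show "dist_from b x \<le> h x"
      using dist_limit_le_Lip1[OF cont h y b x _ yb]
        wconv_H0_squeeze[OF hy Lip1_Delta_plus[OF h y] wconv_H0_approx] x b
      by (simp add: dist_from_def D_commute[OF x b])
  qed
  then have "h = dist_from b"
    by (intro extensionalityI[OF Lip1_extensional[OF h]]) (simp_all add: dist_from_def)
  then show ?thesis
    using b by blast
qed

end

section \<open>Transport along an isometric isomorphism\<close>

definition transport :: "('b \<Rightarrow> 'a) \<Rightarrow> 'b set \<Rightarrow> ('a \<Rightarrow> dfun) \<Rightarrow> 'b \<Rightarrow> dfun" where
  "transport J S f = restrict (f \<circ> J) S"

locale pm_group_isometry = A: pm_group T G D + B: pm_group T G' D' for T G D G' D' +
  fixes J
  assumes iso: "J \<in> iso G' G"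
    and isometric: "\<And>x y. x \<in> carrier G' \<Longrightarrow> y \<in> carrier G' \<Longrightarrow> D (J x) (J y) = D' x y"

lemma pm_group_isometry_inv_into:
  assumes "pm_group T G D" "pm_group T G' D'" and I: "I \<in> iso G G'"
    and I_isometric: "\<And>x y. x \<in> carrier G \<Longrightarrow> y \<in> carrier G \<Longrightarrow> D' (I x) (I y) = D x y"
  shows "pm_group_isometry T G D G' D' (inv_into (carrier G) I)"
proof -
  interpret A: pm_group T G D by fact
  interpret B: pm_group T G' D' by fact
  have bij: "bij_betw I (carrier G) (carrier G')"
    using I by (simp add: iso_def)
  have "inv_into (carrier G) I x \<in> carrier G" "I (inv_into (carrier G) I x) = x"
    if "x \<in> carrier G'" for x
    using bij that by (auto simp: bij_betw_def inv_into_into f_inv_into_f)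
  then show ?thesis
    using A.iso_set_sym[OF I] I_isometric by unfold_locales metis+
qed

context pm_group_isometry
begin

lemma J_bij: "bij_betw J (carrier G') (carrier G)"
  using iso by (simp add: iso_def)

lemma J_carrier: "x \<in> carrier G' \<Longrightarrow> J x \<in> carrier G"
  using J_bij by (meson bij_betwE)

lemma J_mult: "x \<in> carrier G' \<Longrightarrow> y \<in> carrier G' \<Longrightarrow> J (x \<otimes>\<^bsub>G'\<^esub> y) = J x \<otimes>\<^bsub>G\<^esub> J y"
  using iso by (simp add: iso_def hom_def)

lemma J_image: "J ` carrier G' = carrier G"
  using J_bij by (simp add: bij_betw_def)

abbreviation transp where
  "transp \<equiv> transport J (carrier G')"

lemma transport_Lip1:
  assumes f: "f \<in> A.Lip"
  shows "transp f \<in> B.Lip"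
proof -
  have "T (D' x y) (f (J y)) \<le> f (J x)" if "x \<in> carrier G'" "y \<in> carrier G'" for x y
    using A.Lip1_le[OF f J_carrier J_carrier, OF that] isometric[OF that] by simp
  then show ?thesis
    using A.Lip1_Delta_plus[OF f] J_carrier by (auto simp: Lip1_def transport_def)
qed

lemma odot_terms_transport: "x \<in> carrier G' \<Longrightarrow> B.odot_terms (transp f) (transp g) x = A.odot_terms f g (J x)"
proof safe
  fix F assume x: "x \<in> carrier G'" and "F \<in> A.odot_terms f g (J x)"
  then obtain y z where yz: "y \<in> carrier G" "z \<in> carrier G" "y \<otimes>\<^bsub>G\<^esub> z = J x" "F = T (f y) (g z)"
    by (auto simp: A.odot_terms_def)
  then obtain y' z' where y'z': "y' \<in> carrier G'" "z' \<in> carrier G'" "J y' = y" "J z' = z"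
    using J_image by (metis imageE)
  then have "y' \<otimes>\<^bsub>G'\<^esub> z' = x"
    using J_bij J_mult x yz(3) by (metis B.m_closed bij_betw_imp_inj_on inj_onD)
  then show "F \<in> B.odot_terms (transp f) (transp g) x"
    using y'z' yz(4) unfolding B.odot_terms_def by (auto simp: transport_def)
next
  fix F assume x: "x \<in> carrier G'" and "F \<in> B.odot_terms (transp f) (transp g) x"
  then obtain y z where yz: "y \<in> carrier G'" "z \<in> carrier G'" "y \<otimes>\<^bsub>G'\<^esub> z = x"
    and F: "F = T (transp f y) (transp g z)"
    by (auto simp: B.odot_terms_def)
  then have "F = T (f (J y)) (g (J z))" "J y \<otimes>\<^bsub>G\<^esub> J z = J x"
    using J_mult by (auto simp: transport_def)
  then show "F \<in> A.odot_terms f g (J x)"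
    using A.odot_terms_mem[OF J_carrier J_carrier, OF yz(1,2)] by metis
qed

lemma transport_odot: "transp (odot T G f g) = odot T G' (transp f) (transp g)"
proof (rule extensionalityI[OF _ B.odot_extensional])
  show "transp (odot T G f g) \<in> extensional (carrier G')"
    by (simp add: transport_def)
  fix x assume x: "x \<in> carrier G'"
  have "transp (odot T G f g) x = dsup (A.odot_terms f g (J x))"
    by (simp add: transport_def A.odot_eq_dsup J_carrier x)
  also have "\<dots> = odot T G' (transp f) (transp g) x"
    by (simp add: B.odot_eq_dsup x odot_terms_transport)
  finally show "transp (odot T G f g) x = odot T G' (transp f) (transp g) x" .
qed

lemma transport_PiG:
  assumes f: "f \<in> PiG T (carrier G) D"
  shows "transp f \<in> PiG T (carrier G') D'"
proof -
  from f obtain a where f_Lip: "f \<in> A.Lip" and a: "pm_cauchy (carrier G) D a"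
    and lim: "\<forall>x\<in>carrier G. wconv (\<lambda>n. D (a n) x) (f x) sequentially"
    by (auto simp: PiG_def)
  define a' where "a' n = inv_into (carrier G') J (a n)" for n
  have "a n \<in> carrier G" for n
    using a by (auto simp: pm_cauchy_def)
  then have a': "a' n \<in> carrier G'" "J (a' n) = a n" for n
    unfolding a'_def using J_image by (metis inv_into_into, metis f_inv_into_f)
  have "pm_cauchy (carrier G') D' a'"
    using a a' isometric[OF a'(1) a'(1)] unfolding pm_cauchy_def by (auto simp: case_prod_beta)
  moreover have "wconv (\<lambda>n. D' (a' n) x) (transp f x) sequentially" if x: "x \<in> carrier G'" for x
  proof -
    have "D' (a' n) x = D (a n) (J x)" for n
      using isometric[OF a'(1) x] a'(2) by simp
    then show ?thesis
      using lim J_carrier[OF x] x by (simp add: transport_def)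
  qed
  ultimately show ?thesis
    using transport_Lip1[OF f_Lip] unfolding PiG_def by blast
qed

lemma DD_transport: "DD T (carrier G') (transp f) (transp g) = DD T (carrier G) f g"
proof -
  have "(\<lambda>x. T (transp f x) (transp g x)) ` carrier G' = (\<lambda>x. T (f x) (g x)) ` (J ` carrier G')"
    by (auto simp: transport_def image_image)
  then show ?thesis
    unfolding DD_def J_image by simp
qed

lemma transport_inv_into:
  assumes "f \<in> extensional (carrier G)"
  shows "transport (inv_into (carrier G') J) (carrier G) (transp f) = f"
proof (rule extensionalityI[OF _ assms])
  show "transport (inv_into (carrier G') J) (carrier G) (transp f) \<in> extensional (carrier G)"
    by (simp add: transport_def)
  fix x assume "x \<in> carrier G"
  then show "transport (inv_into (carrier G') J) (carrier G) (transp f) x = f x"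
    using J_image by (simp add: transport_def inv_into_into f_inv_into_f)
qed

lemma inv_into_isometry: "pm_group_isometry T G' D' G D (inv_into (carrier G') J)"
  by (rule pm_group_isometry_inv_into[of T G' D' G D J, OF _ _ iso isometric]) unfold_locales

lemma transport_inverse:
  assumes "g \<in> extensional (carrier G')"
  shows "transp (transport (inv_into (carrier G') J) (carrier G) g) = g"
proof -
  interpret inv: pm_group_isometry T G' D' G D "inv_into (carrier G') J"
    by (rule inv_into_isometry)
  have "inv_into (carrier G) (inv_into (carrier G') J) x = J x" if "x \<in> carrier G'" for x
    using J_bij that by (simp add: bij_betw_inv_into_left inv_into_inv_into_eq)
  then show ?thesis
    using inv.transport_inv_into[OF assms] by (simp add: transport_def cong: restrict_cong)
qed

lemma bij_betw_transport: "bij_betw transp A.Lip B.Lip"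
proof (rule bij_betw_byWitness[where f' = "transport (inv_into (carrier G') J) (carrier G)"])
  interpret inv: pm_group_isometry T G' D' G D "inv_into (carrier G') J"
    by (rule inv_into_isometry)
  show "\<forall>f\<in>A.Lip. transport (inv_into (carrier G') J) (carrier G) (transp f) = f"
    using transport_inv_into A.Lip1_extensional by blast
  show "\<forall>g\<in>B.Lip. transp (transport (inv_into (carrier G') J) (carrier G) g) = g"
    using transport_inverse B.Lip1_extensional by blast
  show "transp ` A.Lip \<subseteq> B.Lip" "transport (inv_into (carrier G') J) (carrier G) ` B.Lip \<subseteq> A.Lip"
    using transport_Lip1 inv.transport_Lip1 by blast+
qed

lemma transport_in_PiG_iff:
  assumes f: "f \<in> A.Lip"
  shows "transp f \<in> PiG T (carrier G') D' \<longleftrightarrow> f \<in> PiG T (carrier G) D"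
proof -
  interpret inv: pm_group_isometry T G' D' G D "inv_into (carrier G') J"
    by (rule inv_into_isometry)
  show ?thesis
    using transport_PiG inv.transport_PiG[of "transp f"] transport_inv_into[OF A.Lip1_extensional[OF f]]
    by metis
qed

lemma DDbar_transport:
  assumes f: "f \<in> A.Lip" and g: "g \<in> A.Lip"
  shows "DDbar T (carrier G') D' (transp f) (transp g) = DDbar T (carrier G) D f g"
proof -
  have "transp f = transp g \<longleftrightarrow> f = g"
    using bij_betw_imp_inj_on[OF bij_betw_transport] f g by (auto dest: inj_onD)
  then show ?thesis
    using transport_in_PiG_iff[OF f] transport_in_PiG_iff[OF g] DD_transport
    unfolding DDbar_def by simp
qed

end

section \<open>Recovering the group from the monoid of 1-Lipschitz maps\<close>

locale complete_pm_group = pm_group +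
  assumes continuous: "continuous_tf T" and sup_continuous: "sup_continuous_tf T"
    and complete: "pm_complete (carrier G) D"

locale Lip1_monoid_isometry =
  A: complete_pm_group T G D + B: complete_pm_group T G' D' for T G D G' D' +
  fixes \<Phi>
  assumes bij: "bij_betw \<Phi> A.Lip B.Lip"
    and hom: "\<And>f g. f \<in> A.Lip \<Longrightarrow> g \<in> A.Lip \<Longrightarrow> \<Phi> (odot T G f g) = odot T G' (\<Phi> f) (\<Phi> g)"
    and isometric: "\<And>f g. f \<in> A.Lip \<Longrightarrow> g \<in> A.Lip \<Longrightarrow>
      DDbar T (carrier G') D' (\<Phi> f) (\<Phi> g) = DDbar T (carrier G) D f g"
begin

lemma Phi_Lip1: "f \<in> A.Lip \<Longrightarrow> \<Phi> f \<in> B.Lip"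
  using bij_betwE[OF bij] by blast

lemma Phi_inj: "f \<in> A.Lip \<Longrightarrow> g \<in> A.Lip \<Longrightarrow> \<Phi> f = \<Phi> g \<Longrightarrow> f = g"
  using bij by (meson bij_betw_imp_inj_on inj_onD)

lemma Phi_surj: "g \<in> B.Lip \<Longrightarrow> \<exists>f\<in>A.Lip. \<Phi> f = g"
  using bij by (metis bij_betw_imp_surj_on imageE)

lemma Phi_dist_from_one: "\<Phi> (A.dist_from \<one>\<^bsub>G\<^esub>) = B.dist_from \<one>\<^bsub>G'\<^esub>"
proof -
  obtain u where u: "u \<in> A.Lip" "\<Phi> u = B.dist_from \<one>\<^bsub>G'\<^esub>"
    using Phi_surj B.dist_from_Lip1 by blast
  have "\<Phi> u = \<Phi> (odot T G (A.dist_from \<one>\<^bsub>G\<^esub>) u)"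
    using A.odot_dist_from_one_left[OF u(1)] by simp
  also have "\<dots> = odot T G' (\<Phi> (A.dist_from \<one>\<^bsub>G\<^esub>)) (B.dist_from \<one>\<^bsub>G'\<^esub>)"
    using hom A.dist_from_Lip1 u by simp
  also have "\<dots> = \<Phi> (A.dist_from \<one>\<^bsub>G\<^esub>)"
    by (rule B.odot_dist_from_one_right[OF Phi_Lip1[OF A.dist_from_Lip1]]) simp
  finally show ?thesis
    using u by simp
qed

lemma Phi_dist_from: "a \<in> carrier G \<Longrightarrow> \<exists>b\<in>carrier G'. \<Phi> (A.dist_from a) = B.dist_from b"
proof -
  assume a: "a \<in> carrier G"
  have "odot T G' (\<Phi> (A.dist_from a)) (\<Phi> (A.dist_from (inv\<^bsub>G\<^esub> a)))
      = \<Phi> (odot T G (A.dist_from a) (A.dist_from (inv\<^bsub>G\<^esub> a)))"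
    using hom A.dist_from_Lip1 a by simp
  also have "\<dots> = \<Phi> (A.dist_from \<one>\<^bsub>G\<^esub>)"
    using A.odot_dist_from a by simp
  finally show ?thesis
    using B.odot_eq_dist_from_one_imp_dist_from[OF B.continuous B.complete
        Phi_Lip1[OF A.dist_from_Lip1[OF a]] Phi_Lip1[OF A.dist_from_Lip1[OF A.inv_closed[OF a]]]]
      Phi_dist_from_one
    by simp
qed

definition point_map where
  "point_map a = (SOME b. b \<in> carrier G' \<and> \<Phi> (A.dist_from a) = B.dist_from b)"

lemma point_map:
  assumes "a \<in> carrier G"
  shows "point_map a \<in> carrier G'" "\<Phi> (A.dist_from a) = B.dist_from (point_map a)"
  using someI_ex[OF Phi_dist_from[OF assms, unfolded Bex_def]] by (simp_all add: point_map_def)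

lemma point_map_mult:
  assumes a: "a \<in> carrier G" and b: "b \<in> carrier G"
  shows "point_map (a \<otimes>\<^bsub>G\<^esub> b) = point_map a \<otimes>\<^bsub>G'\<^esub> point_map b"
proof -
  have "B.dist_from (point_map (a \<otimes>\<^bsub>G\<^esub> b)) = \<Phi> (odot T G (A.dist_from a) (A.dist_from b))"
    using point_map a b A.odot_dist_from by simp
  also have "\<dots> = B.dist_from (point_map a \<otimes>\<^bsub>G'\<^esub> point_map b)"
    using hom A.dist_from_Lip1 a b point_map B.odot_dist_from by simp
  finally show ?thesis
    using B.dist_from_inj point_map a b by simp
qed

lemma point_map_image: "point_map ` carrier G = carrier G'"
proof
  show "point_map ` carrier G \<subseteq> carrier G'"
    using point_map by auto
  show "carrier G' \<subseteq> point_map ` carrier G"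
  proof
    fix b assume b: "b \<in> carrier G'"
    obtain h where h: "h \<in> A.Lip" "\<Phi> h = B.dist_from b"
      using Phi_surj B.dist_from_Lip1[OF b] by blast
    obtain k where k: "k \<in> A.Lip" "\<Phi> k = B.dist_from (inv\<^bsub>G'\<^esub> b)"
      using Phi_surj B.dist_from_Lip1 b by blast
    have "\<Phi> (odot T G h k) = \<Phi> (A.dist_from \<one>\<^bsub>G\<^esub>)"
      using hom h k B.odot_dist_from b Phi_dist_from_one by simp
    then have "odot T G h k = A.dist_from \<one>\<^bsub>G\<^esub>"
      using Phi_inj A.odot_Lip1[OF A.sup_continuous h(1) k(1)] A.dist_from_Lip1 by simp
    then obtain a where a: "a \<in> carrier G" "h = A.dist_from a"
      using A.odot_eq_dist_from_one_imp_dist_from[OF A.continuous A.complete h(1) k(1)] by blast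
    then have "point_map a = b"
      using point_map h b B.dist_from_inj by simp
    then show "b \<in> point_map ` carrier G"
      using a by blast
  qed
qed

lemma point_map_iso: "point_map \<in> iso G G'"
proof -
  have "inj_on point_map (carrier G)"
  proof (rule inj_onI)
    fix a b assume ab: "a \<in> carrier G" "b \<in> carrier G" "point_map a = point_map b"
    then have "A.dist_from a = A.dist_from b"
      using point_map Phi_inj A.dist_from_Lip1 by metis
    then show "a = b"
      using A.dist_from_inj ab by simp
  qed
  then show ?thesis
    using point_map point_map_mult point_map_image by (auto simp: iso_def hom_def bij_betw_def)
qed

lemma point_map_isometric:
  assumes x: "x \<in> carrier G" and y: "y \<in> carrier G"
  shows "D' (point_map x) (point_map y) = D x y"
proof -
  have "DDbar T (carrier G') D' (B.dist_from (point_map x)) (B.dist_from (point_map y))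
      = DDbar T (carrier G) D (A.dist_from x) (A.dist_from y)"
    using isometric A.dist_from_Lip1 x y point_map by metis
  then show ?thesis
    using point_map x y B.dist_from_PiG A.dist_from_PiG B.DD_dist_from A.DD_dist_from
    by (simp add: DDbar_def)
qed

end

theorem mainTheorem17:
  fixes T :: "dfun \<Rightarrow> dfun \<Rightarrow> dfun"
    and G :: "('a, 'c) monoid_scheme" and D :: "'a \<Rightarrow> 'a \<Rightarrow> dfun"
    and G' :: "('b, 'd) monoid_scheme" and D' :: "'b \<Rightarrow> 'b \<Rightarrow> dfun"
  assumes "triangle_function T" and "continuous_tf T" and "sup_continuous_tf T"
    and "units_Delta T = {H0}"
    and "inv_pm_group G D T" and "pm_complete (carrier G) D"
    and "inv_pm_group G' D' T" and "pm_complete (carrier G') D'"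
  shows "(\<exists>I. I \<in> iso G G' \<and> (\<forall>x\<in>carrier G. \<forall>y\<in>carrier G. D' (I x) (I y) = D x y))
     \<longleftrightarrow> (\<exists>\<Phi>. bij_betw \<Phi> (Lip1 T (carrier G) D) (Lip1 T (carrier G') D')
            \<and> (\<forall>f\<in>Lip1 T (carrier G) D. \<forall>g\<in>Lip1 T (carrier G) D.
                  \<Phi> (odot T G f g) = odot T G' (\<Phi> f) (\<Phi> g))
            \<and> (\<forall>f\<in>Lip1 T (carrier G) D. \<forall>g\<in>Lip1 T (carrier G) D.
                  DDbar T (carrier G') D' (\<Phi> f) (\<Phi> g) = DDbar T (carrier G) D f g))"
    (is "?isometric_iso \<longleftrightarrow> ?monoid_isometry")
proof -
  interpret A: complete_pm_group T G D
    using assms by unfold_locales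
  interpret B: complete_pm_group T G' D'
    using assms by unfold_locales
  show ?thesis
  proof
    assume ?isometric_iso
    then obtain I where "I \<in> iso G G'" "\<And>x y. x \<in> carrier G \<Longrightarrow> y \<in> carrier G \<Longrightarrow> D' (I x) (I y) = D x y"
      by blast
    then interpret pm_group_isometry T G D G' D' "inv_into (carrier G) I"
      by (intro pm_group_isometry_inv_into) unfold_locales
    show ?monoid_isometry
      using bij_betw_transport transport_odot DDbar_transport by blast
  next
    assume ?monoid_isometry
    then obtain \<Phi> where "bij_betw \<Phi> A.Lip B.Lip"
      and "\<And>f g. f \<in> A.Lip \<Longrightarrow> g \<in> A.Lip \<Longrightarrow> \<Phi> (odot T G f g) = odot T G' (\<Phi> f) (\<Phi> g)"
      and "\<And>f g. f \<in> A.Lip \<Longrightarrow> g \<in> A.Lip \<Longrightarrow>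
        DDbar T (carrier G') D' (\<Phi> f) (\<Phi> g) = DDbar T (carrier G) D f g"
      by blast
    then interpret Lip1_monoid_isometry T G D G' D' \<Phi>
      by unfold_locales
    show ?isometric_iso
      using point_map_iso point_map_isometric by blast
  qed
qed

end
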